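(* Let $n\ge 1$ and let $\|\cdot\|_L$ be one of the vectorized norms $L_1,L_2,L_\infty$ on $\mathbb{R}^{n\times n}$. Let $M\subset\mathbb{R}^{n\times n}$ be a measurable set of finite positive Lebesgue measure containing an open ball $B(a,c)$ whose radius $c$ is large enough that $B(a,c)$ contains a singular matrix of rank $n-1$, and let $S_M$ be the set of singular matrices in $M$. Let $F:\mathbb{R}^{n\times n}\to\mathbb{R}^{n\times n}$ be any polynomial Lipschitz continuous function. Then for every $k>n^2$, $$\mathbb{E}_{x\sim M}\big[\|\mathrm{Inv}(x)-F(x)\|_L^k\big]=\frac{1}{m(M)}\int_{M\setminus S_M}\|\mathrm{Inv}(x)-F(x)\|_L^k\,dm(x)=+\infty.$$
   Context: $\mathrm{Inv}(x)=x^{-1}$ denotes matrix inversion, defined on invertible matrices; $S_M$ has Lebesgue measure zero. For $A=(a_{ij})\in\mathbb{R}^{n\times n}$ the norms are vectorized: $\|A\|_{L_1}=\sum_{i,j}|a_{ij}|$, $\|A\|_{L_2}=(\sum_{i,j}|a_{ij}|^2)^{1/2}$, $\|A\|_{L_\infty}=\max_{i,j}|a_{ij}|$; $\mathbb{R}^{n\times n}$ is identified with $\mathbb{R}^{n^2}$ with Lebesgue measure $m$. A function $f:\mathbb{R}^{n_1}\to\mathbb{R}^{n_2}$ is called polynomial Lipschitz continuous with respect to norms $\|\cdot\|_{L^+}$, $\|\cdot\|_{L^*}$ (chosen among $L_1,L_2,L_\infty$) if there exist a nonnegative integer $N$ and real polynomials $f_0,\dots,f_N$ in two variables such that for all $x,y$,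 $\|f(x)-f(y)\|_{L^*}\le \sum_{i=0}^{N} f_i(\|x\|_{L^+},\|y\|_{L^+})\|x-y\|_{L^+}^{i}$. *)

theory Defs
  imports "HOL-Analysis.Analysis"
begin

datatype vnorm_kind = L1 | L2 | Linf

definition vnorm :: "vnorm_kind \<Rightarrow> real^'n^'m \<Rightarrow> real" where
  "vnorm L A = (case L of
      L1 \<Rightarrow> (\<Sum>i\<in>UNIV. \<Sum>j\<in>UNIV. \<bar>A $ i $ j\<bar>)
    | L2 \<Rightarrow> sqrt (\<Sum>i\<in>UNIV. \<Sum>j\<in>UNIV. \<bar>A $ i $ j\<bar>^2)
    | Linf \<Rightarrow> Max {\<bar>A $ i $ j\<bar> | i j. True})"

text \<open>Real polynomials in two variables are
  represented explicitly by coefficient families: the i-th polynomial is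
  (s,t) \<mapsto> sum over p,q \<le> D of c i p q * s^p * t^q.\<close>
definition poly_lipschitz ::
  "vnorm_kind \<Rightarrow> vnorm_kind \<Rightarrow> (real^'n^'m \<Rightarrow> real^'k^'l) \<Rightarrow> bool" where
  "poly_lipschitz Lp Ls f \<longleftrightarrow>
     (\<exists>N::nat. \<exists>D::nat. \<exists>c::nat \<Rightarrow> nat \<Rightarrow> nat \<Rightarrow> real.
        \<forall>x y. vnorm Ls (f x - f y) \<le>
          (\<Sum>i\<le>N. (\<Sum>p\<le>D. \<Sum>q\<le>D. c i p q * (vnorm Lp x)^p * (vnorm Lp y)^q)
                    * (vnorm Lp (x - y))^i))"

definition Inv :: "real^'n^'n \<Rightarrow> real^'n^'n" where
  "Inv x = matrix_inv x"

definition vball :: "vnorm_kind \<Rightarrow> real^'n^'m \<Rightarrow> real \<Rightarrow> (real^'n^'m) set" where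
  "vball L a c = {x. vnorm L (x - a) < c}"

end

theory Submission
  imports Defs
begin

text \<open>Near a singular matrix \<open>y\<close> of rank \<open>n - 1\<close> some cofactor \<open>C\<^sub>i\<^sub>j\<close> is nonzero, and by the
  adjugate formula \<open>Inv(x)\<^sub>j\<^sub>i = C\<^sub>i\<^sub>j(x) / det x\<close>. Moving \<open>x\<close> along the line \<open>x + t E\<^sub>i\<^sub>j\<close> leaves
  \<open>C\<^sub>i\<^sub>j\<close> unchanged and changes \<open>det\<close> affinely with slope \<open>C\<^sub>i\<^sub>j(x)\<close>, so on that line
  \<open>|Inv(x + t E\<^sub>i\<^sub>j)\<^sub>j\<^sub>i| = 1 / |t - t\<^sub>0|\<close>. A polynomial Lipschitz \<open>F\<close> is bounded near \<open>y\<close>,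
  hence \<open>|Inv - F|\<^sup>k\<close> dominates \<open>1 / (2 |t - t\<^sub>0|)\<close> near \<open>t\<^sub>0\<close> as soon as \<open>k \<ge> 1\<close>, which is not
  integrable. By Tonelli and translation invariance the integral over any open set of such
  lines is infinite.\<close>

section \<open>Vectorized norms\<close>

lemma finite_abs_entries: "finite {\<bar>A $ i $ j\<bar> | i j. True}" for A :: "real^'n^'m"
proof -
  have "{\<bar>A $ i $ j\<bar> | i j. True} = (\<lambda>(i, j). \<bar>A $ i $ j\<bar>) ` UNIV" by auto
  then show ?thesis by simp
qed

lemma abs_entry_le_vnorm: "\<bar>A $ i $ j\<bar> \<le> vnorm K A" for A :: "real^'n^'m"
proof (cases K)
  case L1
  have "\<bar>A $ i $ j\<bar> \<le> (\<Sum>j\<in>UNIV. \<bar>A $ i $ j\<bar>)"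
    by (rule member_le_sum) auto
  also have "\<dots> \<le> (\<Sum>i\<in>UNIV. \<Sum>j\<in>UNIV. \<bar>A $ i $ j\<bar>)"
    by (rule member_le_sum[where f = "\<lambda>i. \<Sum>j\<in>UNIV. \<bar>A $ i $ j\<bar>"]) (auto intro: sum_nonneg)
  finally show ?thesis using L1 by (simp add: vnorm_def)
next
  case L2
  have "\<bar>A $ i $ j\<bar>\<^sup>2 \<le> (\<Sum>j\<in>UNIV. \<bar>A $ i $ j\<bar>\<^sup>2)"
    by (rule member_le_sum) auto
  also have "\<dots> \<le> (\<Sum>i\<in>UNIV. \<Sum>j\<in>UNIV. \<bar>A $ i $ j\<bar>\<^sup>2)"
    by (rule member_le_sum[where f = "\<lambda>i. \<Sum>j\<in>UNIV. \<bar>A $ i $ j\<bar>\<^sup>2"]) (auto intro: sum_nonneg)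
  finally have "sqrt (\<bar>A $ i $ j\<bar>\<^sup>2) \<le> sqrt (\<Sum>i\<in>UNIV. \<Sum>j\<in>UNIV. \<bar>A $ i $ j\<bar>\<^sup>2)"
    by (rule real_sqrt_le_mono)
  then show ?thesis using L2 by (simp add: vnorm_def)
next
  case Linf
  have "\<bar>A $ i $ j\<bar> \<le> Max {\<bar>A $ i $ j\<bar> | i j. True}"
    by (rule Max_ge[OF finite_abs_entries]) auto
  then show ?thesis using Linf by (simp add: vnorm_def)
qed

lemma vnorm_nonneg: "0 \<le> vnorm K A" for A :: "real^'n^'m"
  using abs_entry_le_vnorm[of A _ _ K] by (meson abs_ge_zero order_trans)

lemma vnorm_le_sum_abs_entries: "vnorm K A \<le> (\<Sum>i\<in>UNIV. \<Sum>j\<in>UNIV. \<bar>A $ i $ j\<bar>)"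
  for A :: "real^'n^'m"
proof (cases K)
  case L1
  then show ?thesis by (simp add: vnorm_def)
next
  case L2
  have "sqrt (\<Sum>i\<in>UNIV. \<Sum>j\<in>UNIV. \<bar>A $ i $ j\<bar>\<^sup>2) = L2_set (\<lambda>p. \<bar>A $ fst p $ snd p\<bar>) UNIV"
    by (simp add: L2_set_def sum.cartesian_product split_def)
  also have "\<dots> \<le> (\<Sum>p\<in>UNIV. \<bar>A $ fst p $ snd p\<bar>)"
    by (rule L2_set_le_sum) auto
  also have "\<dots> = (\<Sum>i\<in>UNIV. \<Sum>j\<in>UNIV. \<bar>A $ i $ j\<bar>)"
    by (simp add: sum.cartesian_product split_def)
  finally show ?thesis using L2 by (simp add: vnorm_def)
next
  case Linf
  have "Max {\<bar>A $ i $ j\<bar> | i j. True} \<le> (\<Sum>i\<in>UNIV. \<Sum>j\<in>UNIV. \<bar>A $ i $ j\<bar>)"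
    using abs_entry_le_vnorm[of A _ _ L1]
    by (subst Max_le_iff[OF finite_abs_entries]) (auto simp: vnorm_def)
  then show ?thesis using Linf by (simp add: vnorm_def)
qed

lemma abs_entry_le_norm: "\<bar>A $ i $ j\<bar> \<le> norm A" for A :: "real^'n^'m"
  using component_le_norm_cart[of "A $ i" j] Finite_Cartesian_Product.norm_nth_le[of A i] by simp

lemma vnorm_le_card_norm: "vnorm K A \<le> real (CARD('m) * CARD('n)) * norm A"
  for A :: "real^'n^'m"
proof -
  have "vnorm K A \<le> (\<Sum>i\<in>(UNIV::'m set). \<Sum>j\<in>(UNIV::'n set). norm A)"
    using vnorm_le_sum_abs_entries[of K A] abs_entry_le_norm[of A] by (meson order_trans sum_mono)
  then show ?thesis by simp
qed

lemma vnorm_Linf_less_iff: "vnorm Linf A < c \<longleftrightarrow> (\<forall>i j. \<bar>A $ i $ j\<bar> < c)"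
  for A :: "real^'n^'m"
  unfolding vnorm_def vnorm_kind.case by (subst Max_less_iff[OF finite_abs_entries]) auto

lemma open_vball: "open (vball K a c)" for a :: "real^'n^'m"
proof (cases K)
  case L1
  then show ?thesis unfolding vball_def vnorm_def
    by (simp, intro open_Collect_less continuous_intros)
next
  case L2
  then show ?thesis unfolding vball_def vnorm_def
    by (simp, intro open_Collect_less continuous_intros)
next
  case Linf
  have "vball K a c = (\<Inter>p\<in>UNIV. {x. \<bar>(x - a) $ fst p $ snd p\<bar> < c})"
    unfolding vball_def Linf vnorm_Linf_less_iff by auto
  also have "open \<dots>"
    by (intro open_INT ballI open_Collect_less continuous_intros) auto
  finally show ?thesis .
qed

section \<open>Cofactors\<close>

text \<open>Expanding along row \<open>i\<close> shows that this is the signed cofactor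
  \<open>(-1)\<^sup>i\<^sup>+\<^sup>j det (minor\<^sub>i\<^sub>j x)\<close>.\<close>

definition cofactor :: "'n::finite \<Rightarrow> 'n \<Rightarrow> real^'n^'n \<Rightarrow> real" where
  "cofactor i j x = det ((\<chi> r. if r = i then axis j 1 else x $ r) :: real^'n^'n)"

definition matrix_unit :: "'n::finite \<Rightarrow> 'n \<Rightarrow> real^'n^'n" where
  "matrix_unit i j = (\<chi> r. if r = i then axis j 1 else 0)"

lemma det_add_scaleR_matrix_unit:
  fixes x :: "real^'n^'n"
  shows "det (x + t *\<^sub>R matrix_unit i j) = det x + t * cofactor i j x"
proof -
  have "x + t *\<^sub>R matrix_unit i j = (\<chi> r. if r = i then x $ r + t *s axis j 1 else x $ r)"
    by (simp add: matrix_unit_def vec_eq_iff scalar_mult_eq_scaleR)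
  then have "det (x + t *\<^sub>R matrix_unit i j) =
      det ((\<chi> r. if r = i then x $ r else x $ r) :: real^'n^'n)
    + det ((\<chi> r. if r = i then t *s axis j 1 else x $ r) :: real^'n^'n)"
    using det_row_add[of i "\<lambda>r. x $ r" "\<lambda>_. t *s axis j 1" "\<lambda>r. x $ r"] by simp
  also have "det ((\<chi> r. if r = i then t *s axis j 1 else x $ r) :: real^'n^'n) = t * cofactor i j x"
    unfolding cofactor_def by (rule det_row_mul)
  finally show ?thesis by simp
qed

lemma cofactor_add_scaleR_matrix_unit:
  fixes x :: "real^'n^'n"
  shows "cofactor i j (x + t *\<^sub>R matrix_unit i j) = cofactor i j x"
  unfolding cofactor_def by (rule arg_cong[where f = det]) (simp add: matrix_unit_def vec_eq_iff)

lemma Inv_entry_eq_cofactor_div_det: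
  fixes x :: "real^'n^'n"
  assumes "det x \<noteq> 0"
  shows "Inv x $ j $ i = cofactor i j x / det x"
proof -
  let ?B = "matrix_inv x"
  have "invertible x" using assms invertible_det_nz by blast
  then have "?B ** x = mat 1"
    unfolding invertible_def matrix_inv_def by (metis (mono_tags, lifting) someI_ex)
  moreover have "(transpose x *v (?B $ j)) $ r = (?B ** x) $ j $ r" for r
    by (simp add: matrix_vector_mult_def matrix_matrix_mult_def transpose_def mult.commute)
  ultimately have "transpose x *v (?B $ j) = axis j 1"
    by (simp add: vec_eq_iff mat_def axis_def)
  moreover have det_transpose_x: "det (transpose x) \<noteq> 0"
    using assms by (simp add: det_transpose)
  ultimately have "?B $ j $ i
      = det (\<chi> r s. if s = i then (axis j 1 :: real^'n) $ r else transpose x $ r $ s) / det x"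
    using cramer[OF det_transpose_x] by (simp add: det_transpose)
  also have "(\<chi> r s. if s = i then (axis j 1 :: real^'n) $ r else transpose x $ r $ s)
      = transpose ((\<chi> r. if r = i then axis j 1 else x $ r) :: real^'n^'n)"
    by (simp add: vec_eq_iff transpose_def)
  finally show ?thesis by (simp add: Inv_def cofactor_def det_transpose)
qed

lemma continuous_on_cofactor: "continuous_on UNIV (cofactor i j)"
  unfolding cofactor_def det_def
  apply (intro continuous_intros)
  subgoal for p r s by (cases "s = i") (auto intro: continuous_intros)
  done

lemma ex_axis_notin_span:
  fixes S :: "(real^'n) set"
  assumes "dim S < CARD('n)"
  shows "\<exists>j. axis j 1 \<notin> span S"
proof (rule ccontr)
  assume "\<not> ?thesis"
  then have "Basis \<subseteq> span S" by (auto simp: Basis_vec_def)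
  then have "(UNIV :: (real^'n) set) \<subseteq> span S" by (metis span_Basis span_minimal subspace_span)
  then have "dim (UNIV :: (real^'n) set) \<le> dim (span S)" by (rule dim_subset)
  then show False using assms by (simp add: dim_span)
qed

lemma ex_cofactor_neq_0_if_rank_eq:
  fixes y :: "real^'n^'n"
  assumes rank: "rank y = CARD('n) - 1"
  shows "\<exists>i j. cofactor i j y \<noteq> 0"
proof -
  obtain B where B_rows: "B \<subseteq> rows y" and B_indep: "independent B"
    and B_card: "card B = dim (rows y)"
    using basis_exists[of "rows y"] by metis
  have card_B: "card B = CARD('n) - 1" using B_card rank by (simp add: row_rank_def)
  have finite_B: "finite B" using B_indep by (simp add: independent_imp_finite)
  define idx where "idx b = (SOME r. b = row r y)" for b
  have idx: "b = row (idx b) y" if "b \<in> B" for b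
  proof -
    from that B_rows obtain r where "b = row r y" by (auto simp: rows_def)
    then show ?thesis unfolding idx_def by (rule someI)
  qed
  have "inj_on idx B" by (metis idx inj_onI)
  then have "card (idx ` B) < CARD('n)" using card_B by (simp add: card_image)
  then have "idx ` B \<noteq> UNIV" by auto
  then obtain i where i: "i \<notin> idx ` B" by blast
  have "dim B < CARD('n)" using B_indep card_B by (simp add: dim_eq_card_independent)
  then obtain j where j: "axis j 1 \<notin> span B" using ex_axis_notin_span by blast
  define z where "z = ((\<chi> r. if r = i then axis j 1 else y $ r) :: real^'n^'n)"
  have rows_z: "insert (axis j 1) B \<subseteq> rows z"
  proof -
    have "axis j 1 = row i z" by (simp add: z_def row_def vec_eq_iff)
    moreover have "b = row (idx b) z" if "b \<in> B" for b
      using idx[OF that] i that by (auto simp: z_def row_def vec_eq_iff)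
    ultimately show ?thesis by (auto simp: rows_def)
  qed
  have indep: "independent (insert (axis j 1) B)" using B_indep j by (simp add: independent_insert)
  have "axis j 1 \<notin> B" using j span_base by blast
  then have "CARD('n) = card (insert (axis j 1) B)" using card_B finite_B by simp
  also have "\<dots> = dim (insert (axis j 1) B)" using indep by (simp add: dim_eq_card_independent)
  also have "\<dots> \<le> dim (rows z)" using rows_z by (rule dim_subset)
  finally have "\<not> rank z < CARD('n)" by (simp add: row_rank_def)
  then have "det z \<noteq> 0" by (simp add: det_eq_0_rank)
  then show ?thesis unfolding cofactor_def z_def by blast
qed

section \<open>Divergent integrals\<close>

lemma nn_integral_inverse_diverges:
  fixes t0 c d :: real
  assumes c: "0 < c" and d: "0 < d"
  shows "(\<integral>\<^sup>+ t. indicator {t0<..t0 + d} t * ennreal (c / (t - t0)) \<partial>lborel) = \<infinity>"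
proof (rule ccontr)
  let ?I = "\<integral>\<^sup>+ t. indicator {t0<..t0 + d} t * ennreal (c / (t - t0)) \<partial>lborel"
  assume "?I \<noteq> \<infinity>"
  then obtain R where R: "?I = ennreal R" "0 \<le> R" by (cases ?I) auto
  define e where "e = d * exp (- (R + 1) / c)"
  have "exp (- (R + 1) / c) \<le> 1" using R c by (simp add: divide_nonpos_pos)
  then have e: "0 < e" "e \<le> d" using d by (auto simp: e_def mult_le_cancel_left1)
  have "c * (ln d - ln e) = R + 1" using c d by (simp add: e_def ln_mult)
  moreover have "((\<lambda>t. c / (t - t0)) has_integral c * ln d - c * ln e) {t0 + e..t0 + d}"
  proof -
    have "((\<lambda>t. c * ln (t - t0)) has_real_derivative c / (t - t0)) (at t within {t0 + e..t0 + d})"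
      if "t \<in> {t0 + e..t0 + d}" for t
      using that e by (auto intro!: derivative_eq_intros simp: field_simps)
    then show ?thesis
      using fundamental_theorem_of_calculus[of "t0 + e" "t0 + d" "\<lambda>t. c * ln (t - t0)"] e
      by (simp add: has_real_derivative_iff_has_vector_derivative)
  qed
  ultimately have "ennreal (R + 1) = (\<integral>\<^sup>+ t. ennreal (c / (t - t0)) * indicator {t0 + e..t0 + d} t \<partial>lborel)"
    using e c by (subst nn_integral_has_integral_lebesgue') (auto simp: right_diff_distrib)
  also have "\<dots> \<le> ?I"
    using e by (intro nn_integral_mono) (auto simp: indicator_def)
  finally show False using R by (simp add: ennreal_le_iff)
qed

lemma nn_integral_powr_inverse_minus_diverges:
  fixes t0 d C k :: real
  assumes d: "0 < d" and C: "0 \<le> C" and k: "1 \<le> k"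
  shows "(\<integral>\<^sup>+ t. indicator {t0<..t0 + d} t * ennreal ((max 0 (1 / (t - t0) - C)) powr k) \<partial>lborel) = \<infinity>"
proof -
  define d' where "d' = min d (1 / (2 * C + 2))"
  have d': "0 < d'" using d C by (simp add: d'_def)
  have pointwise: "1 / 2 / (t - t0) \<le> (max 0 (1 / (t - t0) - C)) powr k"
    if "t0 < t" "t \<le> t0 + d'" for t
  proof -
    have "t - t0 \<le> 1 / (2 * C + 2)" using that(2) by (simp add: d'_def)
    then have "2 * C + 2 \<le> 1 / (t - t0)"
      using that(1) C by (simp add: le_divide_eq divide_le_eq mult.commute)
    moreover have "1 / 2 / (t - t0) = 1 / (t - t0) / 2" by simp
    ultimately have "1 / 2 / (t - t0) \<le> 1 / (t - t0) - C" and ge_1: "1 \<le> 1 / (t - t0) - C"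
      using C by linarith+
    moreover have "(1 / (t - t0) - C) powr 1 \<le> (1 / (t - t0) - C) powr k"
      using ge_1 k by (intro powr_mono) auto
    ultimately show ?thesis by simp
  qed
  have "indicator {t0<..t0 + d'} t * ennreal (1 / 2 / (t - t0))
      \<le> indicator {t0<..t0 + d} t * ennreal ((max 0 (1 / (t - t0) - C)) powr k)" for t
    using pointwise[of t] by (auto simp: d'_def split: split_indicator intro!: ennreal_leI)
  then have "(\<integral>\<^sup>+ t. indicator {t0<..t0 + d'} t * ennreal (1 / 2 / (t - t0)) \<partial>lborel)
      \<le> (\<integral>\<^sup>+ t. indicator {t0<..t0 + d} t * ennreal ((max 0 (1 / (t - t0) - C)) powr k) \<partial>lborel)"
    by (intro nn_integral_mono)
  then show ?thesis using nn_integral_inverse_diverges[OF _ d', of "1 / 2" t0] by (simp add: top_unique)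
qed

lemma nn_integral_lborel_translate:
  fixes G :: "'a::euclidean_space \<Rightarrow> ennreal"
  assumes "G \<in> borel_measurable borel"
  shows "(\<integral>\<^sup>+ x. G (x + c) \<partial>lborel) = (\<integral>\<^sup>+ x. G x \<partial>lborel)"
proof -
  have "(\<integral>\<^sup>+ x. G x \<partial>lborel) = (\<integral>\<^sup>+ x. G x \<partial>distr lborel borel ((+) c))"
    by (simp add: lborel_distr_plus)
  also have "\<dots> = (\<integral>\<^sup>+ x. G (c + x) \<partial>lborel)"
    using assms by (intro nn_integral_distr) auto
  finally show ?thesis by (simp add: add.commute)
qed

lemma emeasure_lborel_open_pos:
  fixes U :: "'a::euclidean_space set"
  assumes "open U" "U \<noteq> {}"
  shows "0 < emeasure lborel U"
proof -
  have "U \<notin> null_sets lebesgue"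
    using open_not_negligible[OF assms] by (simp add: negligible_iff_null_sets)
  then show ?thesis
    using assms(1) by (auto simp: null_sets_completion_iff null_sets_def zero_less_iff_neq_zero)
qed

text \<open>Tonelli: integrating \<open>[x \<in> U] [|t| \<le> s] G (x + t E)\<close> first in \<open>t\<close> gives \<open>\<infinity>\<close>,
  first in \<open>x\<close> gives at most \<open>2 s \<integral> G\<close> by translation invariance.\<close>

lemma nn_integral_eq_top_if_segment_integrals_eq_top:
  fixes G :: "'a::euclidean_space \<Rightarrow> ennreal" and E :: 'a
  assumes G[measurable]: "G \<in> borel_measurable borel"
    and U: "open U" "U \<noteq> {}" and s: "0 < s"
    and segment: "\<And>x. x \<in> U \<Longrightarrow> (\<integral>\<^sup>+ t. indicator {-s..s} t * G (x + t *\<^sub>R E) \<partial>lborel) = \<infinity>"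
  shows "(\<integral>\<^sup>+ x. G x \<partial>lborel) = \<infinity>"
proof (rule ccontr)
  assume finite: "(\<integral>\<^sup>+ x. G x \<partial>lborel) \<noteq> \<infinity>"
  define H where "H x t = indicator U x * (indicator {-s..s} t * G (x + t *\<^sub>R E))" for x t
  have [measurable]: "U \<in> sets borel" using U(1) by simp
  have H_meas: "case_prod H \<in> borel_measurable (lborel \<Otimes>\<^sub>M lborel)"
    unfolding H_def by measurable
  have "(\<integral>\<^sup>+ x. (\<integral>\<^sup>+ t. H x t \<partial>lborel) \<partial>lborel) = (\<integral>\<^sup>+ t. (\<integral>\<^sup>+ x. H x t \<partial>lborel) \<partial>lborel)"
    using lborel_pair.Fubini'[OF H_meas] by simp
  also have "\<dots> \<le> (\<integral>\<^sup>+ t. (\<integral>\<^sup>+ x. G x \<partial>lborel) * indicator {-s..s} t \<partial>lborel)"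
  proof (rule nn_integral_mono)
    fix t :: real
    have "(\<integral>\<^sup>+ x. H x t \<partial>lborel) \<le> (\<integral>\<^sup>+ x. indicator {-s..s} t * G (x + t *\<^sub>R E) \<partial>lborel)"
      by (rule nn_integral_mono) (auto simp: H_def indicator_def)
    also have "\<dots> = indicator {-s..s} t * (\<integral>\<^sup>+ x. G (x + t *\<^sub>R E) \<partial>lborel)"
      by (intro nn_integral_cmult) measurable
    also have "\<dots> = indicator {-s..s} t * (\<integral>\<^sup>+ x. G x \<partial>lborel)"
      using nn_integral_lborel_translate[OF G] by simp
    finally show "(\<integral>\<^sup>+ x. H x t \<partial>lborel) \<le> (\<integral>\<^sup>+ x. G x \<partial>lborel) * indicator {-s..s} t"
      by (simp add: mult.commute)
  qed
  also have "\<dots> = (\<integral>\<^sup>+ x. G x \<partial>lborel) * emeasure lborel {-s..s}"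
    by (rule nn_integral_cmult_indicator) auto
  also have "\<dots> < \<infinity>" using finite s by (simp add: ennreal_mult_less_top top.not_eq_extremum)
  finally have "(\<integral>\<^sup>+ x. (\<integral>\<^sup>+ t. H x t \<partial>lborel) \<partial>lborel) < \<infinity>" .
  moreover have "(\<integral>\<^sup>+ x. (\<integral>\<^sup>+ t. H x t \<partial>lborel) \<partial>lborel) = (\<integral>\<^sup>+ x. \<infinity> * indicator U x \<partial>lborel)"
    using segment by (intro nn_integral_cong) (simp add: H_def indicator_def)
  moreover have "\<dots> = \<infinity>"
    using emeasure_lborel_open_pos[OF U] by (subst nn_integral_cmult_indicator) (auto simp: ennreal_top_mult)
  ultimately show False by simp
qed

lemma poly_lipschitz_entries_bounded:
  fixes F :: "real^'n^'m \<Rightarrow> real^'k^'l"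
  assumes "poly_lipschitz Lp Ls F" and "bounded S"
  shows "\<exists>C. \<forall>x\<in>S. \<forall>i j. \<bar>F x $ i $ j\<bar> \<le> C"
proof -
  obtain N D c where lip: "\<And>x z. vnorm Ls (F x - F z) \<le>
      (\<Sum>i\<le>N. (\<Sum>p\<le>D. \<Sum>q\<le>D. c i p q * (vnorm Lp x)^p * (vnorm Lp z)^q) * (vnorm Lp (x - z))^i)"
    using assms(1) unfolding poly_lipschitz_def by blast
  obtain B where B: "\<And>x. x \<in> S \<Longrightarrow> norm x \<le> B" using assms(2) by (meson bounded_iff)
  define R where "R = real (CARD('m) * CARD('n)) * B"
  define v where "v = vnorm Lp (0 :: real^'n^'m)"
  have v: "0 \<le> v" by (simp add: v_def vnorm_nonneg)
  define Q where "Q = (\<Sum>i\<le>N. \<Sum>p\<le>D. \<Sum>q\<le>D. \<bar>c i p q\<bar> * (R^p * v^q * R^i))"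
  define C where "C = vnorm Ls (F 0) + \<bar>Q\<bar>"
  have "\<bar>F x $ i $ j\<bar> \<le> C" if x: "x \<in> S" for x i j
  proof -
    let ?u = "vnorm Lp x"
    have u: "0 \<le> ?u" "?u \<le> R"
      using vnorm_nonneg vnorm_le_card_norm[of Lp x] B[OF x] unfolding R_def
      by (auto intro: order_trans mult_left_mono)
    have "vnorm Ls (F x - F 0) \<le> (\<Sum>i\<le>N. \<Sum>p\<le>D. \<Sum>q\<le>D. c i p q * (?u^p * v^q * ?u^i))"
      using lip[of x 0] by (simp add: v_def sum_distrib_right mult.assoc)
    also have "\<dots> \<le> Q" unfolding Q_def
    proof (intro sum_mono)
      fix i p q
      have "0 \<le> ?u^p * v^q * ?u^i" using u v by simp
      moreover have "?u^p * v^q * ?u^i \<le> R^p * v^q * R^i"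
        using u v by (intro mult_mono power_mono) auto
      ultimately show "c i p q * (?u^p * v^q * ?u^i) \<le> \<bar>c i p q\<bar> * (R^p * v^q * R^i)"
        by (meson abs_ge_self abs_ge_zero mult_mono order_trans)
    qed
    finally have "\<bar>(F x - F 0) $ i $ j\<bar> \<le> Q"
      using abs_entry_le_vnorm[of "F x - F 0" i j Ls] by linarith
    moreover have "\<bar>F 0 $ i $ j\<bar> \<le> vnorm Ls (F 0)" by (rule abs_entry_le_vnorm)
    ultimately show ?thesis unfolding C_def by simp
  qed
  then show ?thesis by blast
qed

section \<open>Blow-up of the inverse near a matrix of rank \<open>n - 1\<close>\<close>

lemma nn_integral_cofactor_ratio_segment_diverges:
  fixes x :: "real^'n^'n"
  assumes det_small: "\<bar>det x\<bar> < s * \<bar>cofactor i j x\<bar>" and C: "0 \<le> C" and k: "1 \<le> k"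
  shows "(\<integral>\<^sup>+ t. indicator {-s..s} t * ennreal ((max 0 (\<bar>cofactor i j (x + t *\<^sub>R matrix_unit i j)
      / det (x + t *\<^sub>R matrix_unit i j)\<bar> - C)) powr k) \<partial>lborel) = \<infinity>"
proof -
  have cof: "cofactor i j x \<noteq> 0" using det_small by auto
  define t0 where "t0 = - det x / cofactor i j x"
  have t0: "\<bar>t0\<bar> < s" using det_small cof by (simp add: t0_def abs_divide divide_less_eq)
  have ratio: "cofactor i j (x + t *\<^sub>R matrix_unit i j) / det (x + t *\<^sub>R matrix_unit i j) = 1 / (t - t0)"
    for t
  proof -
    have "det (x + t *\<^sub>R matrix_unit i j) = cofactor i j x * (t - t0)"
      using cof by (simp add: det_add_scaleR_matrix_unit t0_def field_simps)
    then show ?thesis using cof by (simp add: cofactor_add_scaleR_matrix_unit)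
  qed
  have "(\<integral>\<^sup>+ t. indicator {t0<..t0 + (s - t0)} t * ennreal ((max 0 (1 / (t - t0) - C)) powr k) \<partial>lborel)
      \<le> (\<integral>\<^sup>+ t. indicator {-s..s} t * ennreal ((max 0 (\<bar>cofactor i j (x + t *\<^sub>R matrix_unit i j)
          / det (x + t *\<^sub>R matrix_unit i j)\<bar> - C)) powr k) \<partial>lborel)"
    unfolding ratio using t0 by (intro nn_integral_mono) (auto split: split_indicator)
  then show ?thesis
    using nn_integral_powr_inverse_minus_diverges[of "s - t0" C k t0] t0 C k by (simp add: top_unique)
qed

lemma ex_segment_neighbourhood:
  fixes y :: "real^'n^'n"
  assumes det_y: "det y = 0" and cof_y: "cofactor i j y \<noteq> 0" and \<rho>: "0 < \<rho>"
  obtains s U where "0 < s" and "open U" and "y \<in> U"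
    and "\<And>x. x \<in> U \<Longrightarrow> \<bar>det x\<bar> < s * \<bar>cofactor i j x\<bar>"
    and "\<And>x t. x \<in> U \<Longrightarrow> t \<in> {-s..s} \<Longrightarrow> x + t *\<^sub>R matrix_unit i j \<in> ball y \<rho>"
proof -
  define g where "g = \<bar>cofactor i j y\<bar> / 2"
  have g: "0 < g" using cof_y by (simp add: g_def)
  have "open (ball y \<rho> \<inter> {z. g < \<bar>cofactor i j z\<bar>})"
    by (intro open_Int open_ball open_Collect_less continuous_intros
        continuous_on_cofactor[THEN continuous_on_subset]) auto
  moreover have "y \<in> ball y \<rho> \<inter> {z. g < \<bar>cofactor i j z\<bar>}" using \<rho> cof_y by (simp add: g_def)
  ultimately obtain r where r: "0 < r" "ball y r \<subseteq> ball y \<rho> \<inter> {z. g < \<bar>cofactor i j z\<bar>}"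
    by (meson open_contains_ball)
  define E where "E = matrix_unit i j"
  define s where "s = r / (2 * (norm E + 1))"
  have s: "0 < s" using r by (simp add: s_def add_nonneg_pos)
  have "s * norm E = r / 2 * (norm E / (norm E + 1))" by (simp add: s_def field_simps)
  also have "\<dots> < r / 2 * 1"
    using r by (intro mult_strict_left_mono) (auto simp: divide_less_eq add_nonneg_pos)
  finally have sE: "s * norm E < r / 2" by simp
  define U where "U = ball y (r / 2) \<inter> {x. \<bar>det x\<bar> < s * g}"
  have "open U" unfolding U_def det_def
    by (intro open_Int open_ball open_Collect_less continuous_intros)
  moreover have "y \<in> U" using r s g det_y by (simp add: U_def)
  moreover have "\<bar>det x\<bar> < s * \<bar>cofactor i j x\<bar>" if x: "x \<in> U" for x
  proof -
    have "x \<in> ball y r" using x r(1) by (simp add: U_def)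
    then have "g < \<bar>cofactor i j x\<bar>" using r(2) by blast
    then have "s * g < s * \<bar>cofactor i j x\<bar>" using s by simp
    then show ?thesis using x by (simp add: U_def)
  qed
  moreover have "x + t *\<^sub>R E \<in> ball y \<rho>" if x: "x \<in> U" and t: "t \<in> {-s..s}" for x t
  proof -
    have "dist y (x + t *\<^sub>R E) \<le> dist y x + dist x (x + t *\<^sub>R E)" by (rule dist_triangle)
    also have "dist x (x + t *\<^sub>R E) = \<bar>t\<bar> * norm E" by (simp add: dist_norm)
    also have "\<bar>t\<bar> * norm E \<le> s * norm E" using t by (intro mult_right_mono) auto
    finally have "dist y (x + t *\<^sub>R E) < r" using x sE by (simp add: U_def)
    then show ?thesis using r by auto
  qed
  ultimately show thesis using that s unfolding E_def by blast
qed

lemma nn_integral_cofactor_ratio_diverges: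
  fixes y :: "real^'n^'n"
  assumes det_y: "det y = 0" and cof_y: "cofactor i j y \<noteq> 0"
    and \<rho>: "0 < \<rho>" and C: "0 \<le> C" and k: "1 \<le> k"
  shows "(\<integral>\<^sup>+ z. indicator (ball y \<rho>) z
      * ennreal ((max 0 (\<bar>cofactor i j z / det z\<bar> - C)) powr k) \<partial>lborel) = \<infinity>"
proof -
  obtain s U where s: "0 < s" and U: "open U" "y \<in> U"
    and det_small: "\<And>x. x \<in> U \<Longrightarrow> \<bar>det x\<bar> < s * \<bar>cofactor i j x\<bar>"
    and segment: "\<And>x t. x \<in> U \<Longrightarrow> t \<in> {-s..s} \<Longrightarrow> x + t *\<^sub>R matrix_unit i j \<in> ball y \<rho>"
    using ex_segment_neighbourhood[OF det_y cof_y \<rho>] by blast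
  define G where "G z = indicator (ball y \<rho>) z
      * ennreal ((max 0 (\<bar>cofactor i j z / det z\<bar> - C)) powr k)" for z
  have [measurable]: "(\<lambda>z. cofactor i j z) \<in> borel_measurable borel"
    by (rule borel_measurable_continuous_onI[OF continuous_on_cofactor])
  have [measurable]: "(\<lambda>z. det z :: real) \<in> borel_measurable (borel :: (real^'n^'n) measure)"
    unfolding det_def by (intro borel_measurable_continuous_onI continuous_intros)
  have [measurable]: "ball y \<rho> \<in> sets borel" by simp
  have G_meas: "G \<in> borel_measurable borel"
    unfolding G_def by measurable
  have "(\<integral>\<^sup>+ t. indicator {-s..s} t * G (x + t *\<^sub>R matrix_unit i j) \<partial>lborel) = \<infinity>" if x: "x \<in> U" for x
  proof -
    have "indicator {-s..s} t * G (x + t *\<^sub>R matrix_unit i j) = indicator {-s..s} t * ennreal ((max 0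
        (\<bar>cofactor i j (x + t *\<^sub>R matrix_unit i j) / det (x + t *\<^sub>R matrix_unit i j)\<bar> - C)) powr k)" for t
      using segment[OF x, of t] by (simp add: G_def split: split_indicator)
    then show ?thesis
      using nn_integral_cofactor_ratio_segment_diverges[OF det_small[OF x] C k] by simp
  qed
  then have "(\<integral>\<^sup>+ z. G z \<partial>lborel) = \<infinity>"
    using nn_integral_eq_top_if_segment_integrals_eq_top[OF G_meas U(1) _ s] U(2) by blast
  then show ?thesis by (simp add: G_def)
qed

lemma powr_cofactor_ratio_minus_le_vnorm:
  fixes z :: "real^'n^'n" and F :: "real^'n^'n \<Rightarrow> real^'n^'n"
  assumes "det z \<noteq> 0" and "\<bar>F z $ j $ i\<bar> \<le> C" and "0 \<le> k"
  shows "(max 0 (\<bar>cofactor i j z / det z\<bar> - C)) powr k \<le> vnorm L (Inv z - F z) powr k"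
proof -
  have "\<bar>cofactor i j z / det z\<bar> - C \<le> \<bar>(Inv z - F z) $ j $ i\<bar>"
    using Inv_entry_eq_cofactor_div_det[OF assms(1)] assms(2) by auto
  also have "\<dots> \<le> vnorm L (Inv z - F z)" by (rule abs_entry_le_vnorm)
  finally show ?thesis
    using vnorm_nonneg assms(3) by (intro powr_mono2) auto
qed

lemma nn_integral_vnorm_Inv_minus_diverges:
  fixes y :: "real^'n^'n" and F :: "real^'n^'n \<Rightarrow> real^'n^'n"
  assumes rank: "rank y = CARD('n) - 1" and \<rho>: "0 < \<rho>" and k: "1 \<le> k"
    and F_bounded: "\<And>z i j. z \<in> ball y \<rho> \<Longrightarrow> \<bar>F z $ i $ j\<bar> \<le> C"
  shows "(\<integral>\<^sup>+ z \<in> ball y \<rho> - {z. \<not> invertible z}. ennreal (vnorm L (Inv z - F z) powr k) \<partial>lborel) = \<infinity>"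
proof -
  have det_y: "det y = 0" using rank by (simp add: det_eq_0_rank)
  obtain i j where cof_y: "cofactor i j y \<noteq> 0" using ex_cofactor_neq_0_if_rank_eq[OF rank] by blast
  have C: "0 \<le> C" using F_bounded[of y] \<rho> by (meson abs_ge_zero centre_in_ball order_trans)
  have "indicator (ball y \<rho>) z * ennreal ((max 0 (\<bar>cofactor i j z / det z\<bar> - C)) powr k)
      \<le> ennreal (vnorm L (Inv z - F z) powr k) * indicator (ball y \<rho> - {z. \<not> invertible z}) z" for z
  proof (cases "z \<in> ball y \<rho> \<and> det z \<noteq> 0")
    case True
    then show ?thesis
      using F_bounded k powr_cofactor_ratio_minus_le_vnorm[of z F j i C k L]
      by (simp add: invertible_det_nz ennreal_leI)
  next
    case False
    then show ?thesis using C by (auto split: split_indicator)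
  qed
  then have "(\<integral>\<^sup>+ z. indicator (ball y \<rho>) z * ennreal ((max 0 (\<bar>cofactor i j z / det z\<bar> - C)) powr k) \<partial>lborel)
      \<le> (\<integral>\<^sup>+ z \<in> ball y \<rho> - {z. \<not> invertible z}. ennreal (vnorm L (Inv z - F z) powr k) \<partial>lborel)"
    by (rule nn_integral_mono)
  then show ?thesis
    using nn_integral_cofactor_ratio_diverges[OF det_y cof_y \<rho> C k] by (simp add: top_unique)
qed

theorem theorem3p9:
  fixes L Lp Ls :: vnorm_kind
    and M :: "(real^'n^'n) set"
    and a :: "real^'n^'n" and c :: real
    and F :: "real^'n^'n \<Rightarrow> real^'n^'n"
    and k :: real
  assumes M_meas: "M \<in> sets lebesgue"
    and M_pos: "0 < emeasure lebesgue M"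
    and M_fin: "emeasure lebesgue M < \<infinity>"
    and ball_sub: "vball L a c \<subseteq> M"
    and ball_rank: "\<exists>y \<in> vball L a c. rank y = CARD('n) - 1"
    and F_pl: "poly_lipschitz Lp Ls F"
    and k_gt: "k > real (CARD('n)^2)"
  shows "(\<integral>\<^sup>+ x \<in> M - {x \<in> M. \<not> invertible x}.
            ennreal (vnorm L (Inv x - F x) powr k) \<partial>lebesgue)
           / emeasure lebesgue M = \<infinity>"
proof -
  have "(1::real) \<le> real (CARD('n)^2)" by simp
  then have k: "1 \<le> k" using k_gt by linarith
  obtain y where y: "y \<in> vball L a c" and rank: "rank y = CARD('n) - 1" using ball_rank by blast
  obtain \<rho> where \<rho>: "0 < \<rho>" "ball y \<rho> \<subseteq> vball L a c"
    using open_vball y open_contains_ball by blast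
  obtain C where "\<forall>z\<in>ball y \<rho>. \<forall>i j. \<bar>F z $ i $ j\<bar> \<le> C"
    using poly_lipschitz_entries_bounded[OF F_pl bounded_ball] by blast
  then have "(\<integral>\<^sup>+ z \<in> ball y \<rho> - {z. \<not> invertible z}. ennreal (vnorm L (Inv z - F z) powr k) \<partial>lborel) = \<infinity>"
    using nn_integral_vnorm_Inv_minus_diverges[OF rank \<rho>(1) k] by blast
  moreover have "(\<integral>\<^sup>+ z \<in> ball y \<rho> - {z. \<not> invertible z}. ennreal (vnorm L (Inv z - F z) powr k) \<partial>lborel)
      \<le> (\<integral>\<^sup>+ x \<in> M - {x \<in> M. \<not> invertible x}. ennreal (vnorm L (Inv x - F x) powr k) \<partial>lebesgue)"
    using \<rho>(2) ball_sub unfolding nn_integral_completion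
    by (intro nn_integral_mono) (auto split: split_indicator)
  ultimately have "(\<integral>\<^sup>+ x \<in> M - {x \<in> M. \<not> invertible x}.
      ennreal (vnorm L (Inv x - F x) powr k) \<partial>lebesgue) = \<infinity>"
    by (simp add: top_unique)
  then show ?thesis using M_fin by (simp add: ennreal_top_divide)
qed

end
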